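(* Let $n\ge 3$. For the power graph $P(G(n))$ of the gyrogroup $G(n)$ (defined in the context), $$dis(P(G(n)),i)=\begin{cases}2^n, & i=0,\\ \dfrac{2^{n-1}(2^{n-1}+1)}{2}, & i=1,\\ \dfrac{3\cdot 2^{n-1}(2^{n-1}-1)}{2}, & i=2.\end{cases}$$
   Context: Let $n\ge 3$ be an integer and $m=2^{n-1}$. Let $P(n)=\{0,1,\dots,m-1\}$, $H(n)=\{m,m+1,\dots,2^n-1\}$ and $G(n)=P(n)\cup H(n)$. For $i,j\in G(n)$ let $t,s,k\in P(n)$ be the residues modulo $m$ (taken in $\{0,\dots,m-1\}$) of $i+j$, $i+(\frac m2-1)j$ and $(\frac m2+1)i+(\frac m2-1)j$, respectively, and define $i\oplus j=t$ if $i,j\in P(n)$; $i\oplus j=t+m$ if $i\in P(n),j\in H(n)$; $i\oplus j=s+m$ if $i\in H(n),j\in P(n)$; $i\oplus j=k$ if $i,j\in H(n)$. Then $(G(n),\oplus)$ is a gyrogroup with identity $e=0$. Powers are defined by $a^1=a$, $a^{k+1}=a^k\oplus a$. The power graph $P(G(n))$ is the simple undirected graph with vertex set $G(n)$ in which distinct vertices $u,v$ are adjacent if and only if $u^k=v$ or $v^k=u$ for some positive integer $k$. For a connected graph $G$ with distance function $d$, $dis(G,i)$ denotes the number of unordered pairs $\{u,v\}$ of vertices (with $u=v$ allowed) such that $d(u,v)=i$. *)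

theory Defs
  imports Main
begin

text \<open>The gyrogroup G(n) on carrier {0..<2^n}, with m = 2^(n-1),
  P(n) = {0..<m}, H(n) = {m..<2^n}.\<close>

definition gcar :: "nat \<Rightarrow> nat set" where
  "gcar n = {0..<2^n}"

definition gop :: "nat \<Rightarrow> nat \<Rightarrow> nat \<Rightarrow> nat" where
  "gop n i j =
     (let m = 2^(n-1);
          t = (i + j) mod m;
          s = (i + (m div 2 - 1) * j) mod m;
          k = ((m div 2 + 1) * i + (m div 2 - 1) * j) mod m
      in if i < m \<and> j < m then t
         else if i < m \<and> m \<le> j then t + m
         else if m \<le> i \<and> j < m then s + m
         else k)"

text \<open>Powers: a^1 = a, a^(k+1) = a^k \<oplus> a (the value at 0 is irrelevant).\<close>
fun gpow :: "nat \<Rightarrow> nat \<Rightarrow> nat \<Rightarrow> nat" where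
  "gpow n a 0 = 0"
| "gpow n a (Suc 0) = a"
| "gpow n a (Suc (Suc k)) = gop n (gpow n a (Suc k)) a"

definition padj :: "nat \<Rightarrow> nat \<Rightarrow> nat \<Rightarrow> bool" where
  "padj n u v \<longleftrightarrow> u \<in> gcar n \<and> v \<in> gcar n \<and> u \<noteq> v \<and>
     (\<exists>k\<ge>1. gpow n u k = v \<or> gpow n v k = u)"

fun pwalk :: "nat \<Rightarrow> nat \<Rightarrow> nat \<Rightarrow> nat \<Rightarrow> bool" where
  "pwalk n 0 u v \<longleftrightarrow> u = v \<and> u \<in> gcar n"
| "pwalk n (Suc k) u v \<longleftrightarrow> (\<exists>w. padj n u w \<and> pwalk n k w v)"

text \<open>Graph distance (the graph is connected).\<close>
definition pdist :: "nat \<Rightarrow> nat \<Rightarrow> nat \<Rightarrow> nat" where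
  "pdist n u v = (LEAST k. pwalk n k u v)"

definition dis :: "nat \<Rightarrow> nat \<Rightarrow> nat" where
  "dis n i = card {{u, v} | u v. u \<in> gcar n \<and> v \<in> gcar n \<and> pdist n u v = i}"

end

theory Submission
  imports Defs "HOL-Number_Theory.Cong"
begin

text \<open>On P(n) the operation is addition modulo \<open>m\<close>, so the powers of \<open>p \<in> P(n)\<close> are its multiples
  in the cyclic group \<open>\<int>/m\<close>; as \<open>m\<close> is a power of 2, of any two elements of \<open>\<int>/m\<close> one is a multiple
  of the other, so P(n) is a clique of the power graph.  Every \<open>h \<in> H(n)\<close> satisfies \<open>h \<oplus> h = 0\<close> and
  \<open>0 \<oplus> h = h\<close>, so its only powers are \<open>h\<close> and \<open>0\<close>.  Hence the edges are the pairs inside P(n) and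
  the pairs \<open>{0, h}\<close>; as 0 is adjacent to every vertex, all other pairs of distinct vertices are
  at distance 2, namely the pairs inside H(n) and the pairs \<open>{h, p}\<close> with \<open>p \<noteq> 0\<close>.\<close>

lemma prime_power_residue_multiple_either:
  fixes p m u v :: nat
  assumes "prime p" "m = p ^ r" "u < m" "v < m"
  shows "\<exists>k\<ge>1. (k * u) mod m = v \<or> (k * v) mod m = u"
proof -
  have multiple: "\<exists>k\<ge>1. (k * a) mod m = b" if "gcd a m dvd b" "b < m" for a b
  proof -
    obtain x where "[a * x = b] (mod m)" using \<open>gcd a m dvd b\<close> cong_solve_dvd_nat by blast
    \<comment> \<open>\<open>x\<close> may be 0, but exponents of powers start at 1\<close>
    then have "((x + m) * a) mod m = b"
      using \<open>b < m\<close> by (simp add: cong_def algebra_simps)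
    moreover have "x + m \<ge> 1"
      using prime_gt_0_nat[OF assms(1)] assms(2) by (simp add: Suc_le_eq nat_zero_less_power_iff)
    ultimately show ?thesis by blast
  qed
  obtain i j where "gcd u m = p ^ i" "gcd v m = p ^ j"
    using divides_primepow_nat[OF \<open>prime p\<close>] gcd_dvd2 assms(2) by metis
  then have "gcd u m dvd gcd v m \<or> gcd v m dvd gcd u m"
    by (metis le_imp_power_dvd nat_le_linear)
  then have "gcd u m dvd v \<or> gcd v m dvd u" using dvd_trans by blast
  then show ?thesis using multiple assms(3,4) by blast
qed

lemma gop_P_P:
  assumes "m = 2 ^ (n - 1)" "i < m" "j < m"
  shows "gop n i j = (i + j) mod m"
  using assms by (simp add: gop_def Let_def)

lemma gop_H_self:
  assumes "m = 2 ^ (n - 1)" "n \<ge> 2" "m \<le> h" "h < 2 * m"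
  shows "gop n h h = 0"
proof -
  define q where "q = (2::nat) ^ (n - 2)"
  have "n - 1 = Suc (n - 2)" using assms(2) by simp
  then have q: "m = 2 * q" "q \<ge> 1" using assms(1) by (simp_all add: q_def)
  have "gop n h h = ((m div 2 + 1) * h + (m div 2 - 1) * h) mod m"
    unfolding gop_def Let_def assms(1)[symmetric] using assms(3,4) by simp
  also have "m div 2 = q" using q(1) by simp
  also have "(q + 1) * h + (q - 1) * h = m * h"
    using q by (cases q) (simp_all add: algebra_simps)
  finally show ?thesis by simp
qed

lemma gop_0_H:
  assumes "m = 2 ^ (n - 1)" "m \<le> h" "h < 2 * m"
  shows "gop n 0 h = h"
  using assms by (simp add: gop_def Let_def le_mod_geq)

lemma gpow_P:
  assumes "m = 2 ^ (n - 1)" "a < m"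
  shows "gpow n a (Suc k) = (Suc k * a) mod m"
proof (induction k)
  case 0
  then show ?case using assms by simp
next
  case (Suc k)
  have "gpow n a (Suc (Suc k)) = ((Suc k * a) mod m + a) mod m"
    using Suc gop_P_P[OF assms(1) _ assms(2)] assms by simp
  also have "\<dots> = (Suc k * a + a) mod m" by (rule mod_add_left_eq)
  also have "\<dots> = (Suc (Suc k) * a) mod m" by (simp add: add.commute)
  finally show ?case .
qed

lemma gpow_H:
  assumes "m = 2 ^ (n - 1)" "n \<ge> 2" "m \<le> h" "h < 2 * m"
  shows "gpow n h (Suc k) = (if even k then h else 0)"
  by (induction k) (simp_all add: gop_H_self[OF assms] gop_0_H[OF assms(1,3,4)])

lemma gcar_eq:
  assumes "m = 2 ^ (n - 1)" "n \<ge> 1"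
  shows "gcar n = {0..<2 * m}"
  using assms by (cases n) (simp_all add: gcar_def)

lemma gpow_ne_cases:
  assumes "m = 2 ^ (n - 1)" "n \<ge> 2" "gpow n x (Suc k) = y" "x < 2 * m" "x \<noteq> y"
  shows "(x < m \<and> y < m) \<or> (m \<le> x \<and> y = 0)"
proof (cases "x < m")
  case True
  have "m > 0" using assms(1) by simp
  then have "y < m" using assms(3) gpow_P[OF assms(1) True, of k] by (metis mod_less_divisor)
  then show ?thesis using True by simp
next
  case False
  then have "y = (if even k then x else 0)" using assms(3,4) gpow_H[OF assms(1,2), of x k] by simp
  then show ?thesis using False assms(5) by (simp split: if_splits)
qed

lemma padj_iff:
  assumes "m = 2 ^ (n - 1)" "n \<ge> 2"
  shows "padj n u v \<longleftrightarrow> u < 2 * m \<and> v < 2 * m \<and> u \<noteq> v \<and>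
     ((u < m \<and> v < m) \<or> (u = 0 \<and> m \<le> v) \<or> (v = 0 \<and> m \<le> u))"
proof
  assume adj: "padj n u v"
  from adj obtain k where "gpow n u (Suc k) = v \<or> gpow n v (Suc k) = u"
    unfolding padj_def by (auto dest!: Suc_le_D)
  moreover have "u < 2 * m" "v < 2 * m" "u \<noteq> v"
    using adj gcar_eq[OF assms(1)] assms(2) unfolding padj_def by auto
  ultimately show "u < 2 * m \<and> v < 2 * m \<and> u \<noteq> v \<and>
      ((u < m \<and> v < m) \<or> (u = 0 \<and> m \<le> v) \<or> (v = 0 \<and> m \<le> u))"
    using gpow_ne_cases[OF assms, of u k v] gpow_ne_cases[OF assms, of v k u] by auto
next
  assume uv: "u < 2 * m \<and> v < 2 * m \<and> u \<noteq> v \<and>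
      ((u < m \<and> v < m) \<or> (u = 0 \<and> m \<le> v) \<or> (v = 0 \<and> m \<le> u))"
  have "\<exists>k\<ge>1. gpow n u k = v \<or> gpow n v k = u"
  proof (cases "u < m \<and> v < m")
    case True
    then obtain k where k: "k \<ge> 1" "(k * u) mod m = v \<or> (k * v) mod m = u"
      using prime_power_residue_multiple_either[OF two_is_prime_nat assms(1)] by blast
    then obtain j where "k = Suc j" by (cases k) auto
    then have "gpow n u k = (k * u) mod m" "gpow n v k = (k * v) mod m"
      using gpow_P[OF assms(1)] True by simp_all
    then show ?thesis using k by (intro exI[of _ k]) auto
  next
    case False
    then have "(u = 0 \<and> m \<le> v) \<or> (v = 0 \<and> m \<le> u)" using uv by blast
    then have "gpow n v (Suc 1) = u \<or> gpow n u (Suc 1) = v"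
      using gpow_H[OF assms, of v 1] gpow_H[OF assms, of u 1] uv by auto
    then show ?thesis by (intro exI[of _ "Suc 1"]) auto
  qed
  moreover have "gcar n = {0..<2 * m}" using gcar_eq[OF assms(1)] assms(2) by simp
  ultimately show "padj n u v" unfolding padj_def using uv by simp
qed

lemma pwalk_1_iff: "pwalk n 1 u v \<longleftrightarrow> padj n u v"
  by (auto simp: padj_def)

lemma padj_irrefl: "\<not> padj n u u"
  by (simp add: padj_def)

lemma pdist_self: "u \<in> gcar n \<Longrightarrow> pdist n u u = 0"
  by (simp add: pdist_def Least_eq_0)

lemma pdist_eq_1:
  assumes "padj n u v"
  shows "pdist n u v = 1"
  unfolding pdist_def
proof (rule Least_equality)
  show "pwalk n 1 u v" using assms pwalk_1_iff by blast
  show "1 \<le> k" if "pwalk n k u v" for k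
    using that assms by (cases k) (auto simp: padj_def)
qed

lemma pdist_eq_2:
  assumes "u \<noteq> v" "\<not> padj n u v" "padj n u w" "padj n w v"
  shows "pdist n u v = 2"
  unfolding pdist_def
proof (rule Least_equality)
  show "pwalk n 2 u v" using assms(3,4) by (auto simp: numeral_2_eq_2 padj_def)
  show "2 \<le> k" if "pwalk n k u v" for k
  proof (rule ccontr)
    assume "\<not> 2 \<le> k"
    then have "k = 0 \<or> k = 1" by auto
    then show False using that assms(1,2) pwalk_1_iff by auto
  qed
qed

lemma pdist_eq:
  assumes "m = 2 ^ (n - 1)" "n \<ge> 2" "u < 2 * m" "v < 2 * m"
  shows "pdist n u v = (if u = v then 0 else if padj n u v then 1 else 2)"
proof -
  have "m > 0" using assms(1) by simp
  have hub: "padj n x 0" "padj n 0 x" if "x < 2 * m" "x \<noteq> 0" for x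
    using that \<open>m > 0\<close> padj_iff[OF assms(1,2), of x 0] padj_iff[OF assms(1,2), of 0 x] by auto
  show ?thesis
  proof (cases "u = v")
    case True
    then show ?thesis using pdist_self gcar_eq[OF assms(1)] assms(2,3) by simp
  next
    case False
    show ?thesis
    proof (cases "padj n u v")
      case True
      then show ?thesis using pdist_eq_1 \<open>u \<noteq> v\<close> by simp
    next
      case not_adj: False
      have "u \<noteq> 0" using not_adj hub(2) assms(4) \<open>u \<noteq> v\<close> by metis
      moreover have "v \<noteq> 0" using not_adj hub(1) assms(3) \<open>u \<noteq> v\<close> by metis
      ultimately show ?thesis
        using pdist_eq_2[OF \<open>u \<noteq> v\<close> not_adj hub(1) hub(2)] assms(3,4) not_adj \<open>u \<noteq> v\<close> by simp
    qed
  qed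
qed

lemma card_doubletons_Un_cross:
  assumes "finite S" "finite T" "finite U" "T \<inter> U = {}" "S \<inter> U = {}"
  shows "card ({B. B \<subseteq> S \<and> card B = 2} \<union> (\<lambda>(t, u). {t, u}) ` (T \<times> U)) =
    (card S choose 2) + card T * card U"
proof -
  have "inj_on (\<lambda>(t, u). {t, u}) (T \<times> U)"
    using assms(4) by (auto simp: inj_on_def doubleton_eq_iff)
  then have "card ((\<lambda>(t, u). {t, u}) ` (T \<times> U)) = card T * card U"
    by (simp add: card_image card_cartesian_product)
  moreover have "{B. B \<subseteq> S \<and> card B = 2} \<inter> (\<lambda>(t, u). {t, u}) ` (T \<times> U) = {}"
    using assms(5) by auto
  moreover have "finite {B. B \<subseteq> S \<and> card B = 2}"
    using assms(1) by (auto intro: finite_subset[of _ "Pow S"])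
  ultimately show ?thesis
    using n_subsets[OF assms(1), of 2] assms(2,3) by (simp add: card_Un_disjoint)
qed

lemma dis_0:
  assumes "n \<ge> 2"
  shows "dis n 0 = 2 ^ n"
proof -
  define m where "m = (2::nat) ^ (n - 1)"
  have C: "gcar n = {0..<2 * m}" using gcar_eq[OF m_def] assms by simp
  have "{{u, v} | u v. u \<in> gcar n \<and> v \<in> gcar n \<and> pdist n u v = 0} = (\<lambda>u. {u}) ` gcar n"
  proof (intro equalityI subsetI)
    fix B assume "B \<in> {{u, v} | u v. u \<in> gcar n \<and> v \<in> gcar n \<and> pdist n u v = 0}"
    then obtain u v where B: "B = {u, v}" "u \<in> gcar n" "v \<in> gcar n" "pdist n u v = 0" by blast
    then have "u = v" using pdist_eq[OF m_def assms, of u v] C by (simp split: if_splits)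
    then show "B \<in> (\<lambda>u. {u}) ` gcar n" using B by simp
  next
    fix B assume "B \<in> (\<lambda>u. {u}) ` gcar n"
    then obtain u where "B = {u, u}" "u \<in> gcar n" by auto
    then show "B \<in> {{u, v} | u v. u \<in> gcar n \<and> v \<in> gcar n \<and> pdist n u v = 0}"
      using pdist_self by blast
  qed
  then show ?thesis by (simp add: dis_def card_image gcar_def)
qed

lemma doubleton_in_cross_image: "t \<in> T \<Longrightarrow> u \<in> U \<Longrightarrow> {t, u} \<in> (\<lambda>(t, u). {t, u}) ` (T \<times> U)"
  by (rule rev_image_eqI[of "(t, u)"]) auto

lemma pdist_1_iff:
  assumes "m = 2 ^ (n - 1)" "n \<ge> 2" "u < 2 * m" "v < 2 * m"
  shows "pdist n u v = 1 \<longleftrightarrow> padj n u v"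
  using pdist_eq[OF assms] padj_irrefl by (cases "u = v") simp_all

lemma pdist_2_iff:
  assumes "m = 2 ^ (n - 1)" "n \<ge> 2" "u < 2 * m" "v < 2 * m"
  shows "pdist n u v = 2 \<longleftrightarrow> u \<noteq> v \<and> \<not> padj n u v"
  using pdist_eq[OF assms] by simp

lemma pairs_at_distance_1:
  assumes "m = 2 ^ (n - 1)" "n \<ge> 2"
  shows "{{u, v} | u v. u \<in> gcar n \<and> v \<in> gcar n \<and> pdist n u v = 1} =
    {B. B \<subseteq> {0..<m} \<and> card B = 2} \<union> (\<lambda>(t, u). {t, u}) ` ({0} \<times> {m..<2 * m})"
    (is "?pairs = ?within \<union> ?cross")
proof (intro equalityI subsetI)
  have C: "gcar n = {0..<2 * m}" using gcar_eq[OF assms(1)] assms(2) by simp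
  fix B assume "B \<in> ?pairs"
  then obtain u v where B: "B = {u, v}" "u < 2 * m" "v < 2 * m" "padj n u v"
    unfolding C using pdist_1_iff[OF assms] by auto
  then have "u \<noteq> v" "(u < m \<and> v < m) \<or> (u = 0 \<and> m \<le> v) \<or> (v = 0 \<and> m \<le> u)"
    unfolding padj_iff[OF assms] by simp_all
  then consider "u \<noteq> v" "u < m" "v < m" | "B = {0, v}" "m \<le> v" "v < 2 * m"
    | "B = {0, u}" "m \<le> u" "u < 2 * m"
    using B(1-3) by auto
  then show "B \<in> ?within \<union> ?cross"
    by cases (use B(1) doubleton_in_cross_image in auto)
next
  have "m > 0" using assms(1) by simp
  fix B assume "B \<in> ?within \<union> ?cross"
  then consider (within) "B \<subseteq> {0..<m}" "card B = 2" | (cross) h where "B = {0, h}" "m \<le> h" "h < 2 * m"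
    by auto
  then obtain u v where uv: "B = {u, v}" "u < 2 * m" "v < 2 * m" "padj n u v"
  proof cases
    case within
    then obtain u v where "B = {u, v}" "u \<noteq> v" "u < m" "v < m" by (auto simp: card_2_iff)
    then show ?thesis using that[of u v] padj_iff[OF assms] by simp
  next
    case cross
    then show ?thesis using that[of 0 h] padj_iff[OF assms] \<open>m > 0\<close> by simp
  qed
  then have "u \<in> gcar n" "v \<in> gcar n" "pdist n u v = 1"
    using gcar_eq[OF assms(1)] assms(2) pdist_1_iff[OF assms] by simp_all
  then show "B \<in> ?pairs" using uv(1) by blast
qed

lemma pairs_at_distance_2:
  assumes "m = 2 ^ (n - 1)" "n \<ge> 2"
  shows "{{u, v} | u v. u \<in> gcar n \<and> v \<in> gcar n \<and> pdist n u v = 2} =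
    {B. B \<subseteq> {m..<2 * m} \<and> card B = 2} \<union> (\<lambda>(t, u). {t, u}) ` ({m..<2 * m} \<times> {1..<m})"
    (is "?pairs = ?within \<union> ?cross")
proof (intro equalityI subsetI)
  have C: "gcar n = {0..<2 * m}" using gcar_eq[OF assms(1)] assms(2) by simp
  fix B assume "B \<in> ?pairs"
  then obtain u v where B: "B = {u, v}" "u < 2 * m" "v < 2 * m" "u \<noteq> v" "\<not> padj n u v"
    unfolding C using pdist_2_iff[OF assms] by auto
  then have "\<not> ((u < m \<and> v < m) \<or> (u = 0 \<and> m \<le> v) \<or> (v = 0 \<and> m \<le> u))"
    unfolding padj_iff[OF assms] by simp
  then consider "m \<le> u" "m \<le> v" | "B = {v, u}" "0 < u" "u < m" "m \<le> v"
    | "0 < v" "v < m" "m \<le> u"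
    using B(1) by fastforce
  then show "B \<in> ?within \<union> ?cross"
    by cases (use B(1-4) doubleton_in_cross_image in auto)
next
  fix B assume "B \<in> ?within \<union> ?cross"
  then consider (within) "B \<subseteq> {m..<2 * m}" "card B = 2"
    | (cross) h p where "B = {h, p}" "m \<le> h" "h < 2 * m" "0 < p" "p < m"
    by auto
  then obtain u v where uv: "B = {u, v}" "u < 2 * m" "v < 2 * m" "u \<noteq> v" "\<not> padj n u v"
  proof cases
    case within
    then obtain u v where "B = {u, v}" "u \<noteq> v" "m \<le> u" "m \<le> v" "u < 2 * m" "v < 2 * m"
      by (auto simp: card_2_iff)
    then show ?thesis using that[of u v] padj_iff[OF assms] by simp
  next
    case cross
    then show ?thesis using that[of h p] padj_iff[OF assms] by simp
  qed
  then have "u \<in> gcar n" "v \<in> gcar n" "pdist n u v = 2"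
    using gcar_eq[OF assms(1)] assms(2) pdist_2_iff[OF assms] by simp_all
  then show "B \<in> ?pairs" using uv(1) by blast
qed

lemma dis_1:
  assumes "n \<ge> 2"
  shows "dis n 1 = (2 ^ (n - 1) choose 2) + 2 ^ (n - 1)"
proof -
  define m where "m = (2::nat) ^ (n - 1)"
  have "m > 0" by (simp add: m_def)
  have "dis n 1 = card ({B. B \<subseteq> {0..<m} \<and> card B = 2} \<union> (\<lambda>(t, u). {t, u}) ` ({0} \<times> {m..<2 * m}))"
    unfolding dis_def pairs_at_distance_1[OF m_def assms] ..
  also have "\<dots> = (m choose 2) + 1 * m"
    using card_doubletons_Un_cross[of "{0..<m}" "{0}" "{m..<2 * m}"] \<open>m > 0\<close> by simp
  finally show ?thesis by (simp add: m_def)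
qed

lemma dis_2:
  assumes "n \<ge> 2"
  shows "dis n 2 = (2 ^ (n - 1) choose 2) + 2 ^ (n - 1) * (2 ^ (n - 1) - 1)"
proof -
  define m where "m = (2::nat) ^ (n - 1)"
  have "dis n 2 = card ({B. B \<subseteq> {m..<2 * m} \<and> card B = 2} \<union> (\<lambda>(t, u). {t, u}) ` ({m..<2 * m} \<times> {1..<m}))"
    unfolding dis_def pairs_at_distance_2[OF m_def assms] ..
  also have "\<dots> = (m choose 2) + m * (m - 1)"
    using card_doubletons_Un_cross[of "{m..<2 * m}" "{m..<2 * m}" "{1..<m}"] by simp
  finally show ?thesis by (simp add: m_def)
qed

theorem mainTheorem3:
  fixes n :: nat
  assumes "n \<ge> 3"
  shows "dis n 0 = 2^n \<and>
         dis n 1 = 2^(n-1) * (2^(n-1) + 1) div 2 \<and>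
         dis n 2 = 3 * 2^(n-1) * (2^(n-1) - 1) div 2"
proof -
  define m where "m = (2::nat) ^ (n - 1)"
  have "n \<ge> 2" using assms by simp
  have "m * (m + 1) = m * (m - 1) + 2 * m" by (cases m) (simp_all add: algebra_simps)
  then have edges: "m * (m + 1) div 2 = (m choose 2) + m" by (simp add: choose_two)
  have "3 * m * (m - 1) div 2 = m * (m - 1) div 2 + m * (m - 1)" by simp
  then have non_edges: "3 * m * (m - 1) div 2 = (m choose 2) + m * (m - 1)" by (simp add: choose_two)
  show ?thesis
    using dis_0 dis_1 dis_2 \<open>n \<ge> 2\<close> edges non_edges by (simp add: m_def)
qed

end
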